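(* Let $\gamma\in\mathbb{R}$ and $|a|$ small. The $L^2_0(\mathbb{T})$-spectrum of $\mathcal H_a(\gamma)$ is symmetric with respect to reflection through the imaginary axis: if $\mu$ is an eigenvalue of $\mathcal H_a(\gamma)$ then so is $-\overline{\mu}$.
   Context: Here $\rho,\phi\in\mathbb{R}$, $k>0$, and $w$, $c$ describe the small-amplitude periodic traveling wave of the Konopelchenko–Dubrovsky equation: $w$ is smooth, real, even and $2\pi$-periodic, $w(z)=a\cos z+a^2(A_0+A_2\cos 2z)+a^3A_3\cos 3z+O(a^4)$, $c=k^2+a^2c_2+O(a^4)$, with $A_0=-\frac{3\rho}{2k^2}$, $A_2=\frac{\rho}{2k^2}$, $A_3=-\frac{\phi^2}{64k^2}+\frac{3\rho^2}{16k^4}$, $c_2=\frac{3\phi^2}{8}+\frac{15\rho^2}{2k^2}$. The operator $\mathcal H_a(\gamma)=ck\partial_z+k^3\partial_z^3+6k\rho\,\partial_z(w\,\cdot)-\tfrac32\phi^2k\,\partial_z(w^2\,\cdot)-\frac{3\gamma^2}{k}\partial_z^{-1}-3i\phi\gamma\, w_z\,\partial_z^{-1}$ acts in $L^2_0(\mathbb{T})$ (mean-zero $2\pi$-periodic square-integrable functions) with domain $H^3(\mathbb{T})\cap L^2_0(\mathbb{T})$. *)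

theory Defs
  imports "HOL-Analysis.Analysis"
begin

text \<open>Periodic functions on the torus \<open>T = R/2piZ\<close> are represented through their
  Fourier coefficients. Elements of \<open>L^2_0(T)\<close> are identified (unitarily, via Parseval)
  with their Fourier coefficient sequences \<open>u :: int \<Rightarrow> complex\<close> with \<open>u 0 = 0\<close>;
  \<open>H^3(T) \<inter> L^2_0(T)\<close> is the set of such sequences with
  \<open>\<Sum> n^6 |u n|^2 < \<infinity>\<close>.\<close>

definition fcoef :: "(real \<Rightarrow> real) \<Rightarrow> int \<Rightarrow> complex" where
  "fcoef f n = complex_of_real (1 / (2 * pi)) *
     integral {0..2*pi} (\<lambda>z. complex_of_real (f z) * cis (- (of_int n * z)))"

definition H3_0 :: "(int \<Rightarrow> complex) \<Rightarrow> bool" where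
  "H3_0 u \<longleftrightarrow> u 0 = 0 \<and> (\<lambda>n. (real_of_int n) ^ 6 * (cmod (u n))\<^sup>2) summable_on UNIV"

definition dsym :: "int \<Rightarrow> complex" where
  "dsym n = \<i> * of_int n"

definition dinv :: "(int \<Rightarrow> complex) \<Rightarrow> int \<Rightarrow> complex" where
  "dinv u n = (if n = 0 then 0 else u n / dsym n)"

text \<open>Fourier coefficients of a product: discrete convolution.\<close>
definition fconv :: "(int \<Rightarrow> complex) \<Rightarrow> (int \<Rightarrow> complex) \<Rightarrow> int \<Rightarrow> complex" where
  "fconv f g n = (\<Sum>\<^sub>\<infinity>m\<in>UNIV. f m * g (n - m))"

text \<open>Fourier coefficients of
  \<open>H u = ck u_z + k^3 u_zzz + 6k\<rho> (w u)_z - 3/2 \<phi>^2 k (w^2 u)_z - (3\<gamma>^2/k) \<partial>^{-1} u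
        - 3 i \<phi> \<gamma> w_z \<partial>^{-1} u\<close>.\<close>
definition KD_op :: "real \<Rightarrow> real \<Rightarrow> real \<Rightarrow> real \<Rightarrow> real \<Rightarrow> (real \<Rightarrow> real)
    \<Rightarrow> (int \<Rightarrow> complex) \<Rightarrow> int \<Rightarrow> complex" where
  "KD_op k \<rho> \<phi> \<gamma> c w u n =
      of_real (c * k) * dsym n * u n
    + of_real (k ^ 3) * (dsym n) ^ 3 * u n
    + of_real (6 * k * \<rho>) * dsym n * fconv (fcoef w) u n
    - of_real (3 / 2 * \<phi>\<^sup>2 * k) * dsym n * fconv (fcoef (\<lambda>z. (w z)\<^sup>2)) u n
    - of_real (3 * \<gamma>\<^sup>2 / k) * dinv u n
    - 3 * \<i> * of_real (\<phi> * \<gamma>) * fconv (fcoef (deriv w)) (dinv u) n"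

definition KD_eigenvalue :: "real \<Rightarrow> real \<Rightarrow> real \<Rightarrow> real \<Rightarrow> real \<Rightarrow> (real \<Rightarrow> real)
    \<Rightarrow> complex \<Rightarrow> bool" where
  "KD_eigenvalue k \<rho> \<phi> \<gamma> c w \<mu> \<longleftrightarrow>
     (\<exists>u. H3_0 u \<and> u \<noteq> (\<lambda>_. 0) \<and> (\<forall>n. KD_op k \<rho> \<phi> \<gamma> c w u n = \<mu> * u n))"

end

theory Submission
  imports Defs
begin

text \<open>In Fourier variables, coefficientwise conjugation \<open>u \<mapsto> cnj \<circ> u\<close> is the antilinear
  involution \<open>u(z) \<mapsto> conj (u (-z))\<close>. Since \<open>w\<close> is even and \<open>2\<pi>\<close>-periodic, the Fourier
  coefficients of \<open>w\<close> and \<open>w\<^sup>2\<close> are real and those of the odd function \<open>w_z\<close> are purely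
  imaginary; together with \<open>conj (i n) = - i n\<close> this makes \<open>H\<close> anticommute with the involution,
  \<open>H (cnj \<circ> u) = - cnj \<circ> H u\<close>. Hence \<open>H u = \<mu> u\<close> gives \<open>H (cnj \<circ> u) = - cnj \<mu> \<cdot> cnj \<circ> u\<close>.\<close>

lemma integral_reflect_0_2pi:
  fixes g :: "real \<Rightarrow> 'a::euclidean_space"
  shows "integral {0..2*pi} (\<lambda>z. g (2*pi - z)) = integral {0..2*pi} g"
proof -
  have "integral {0..2*pi} (\<lambda>z. g (2*pi - z)) = integral {0..2*pi} ((\<lambda>x. g (-x)) \<circ> ((+) (-2*pi)))"
    by (simp add: o_def)
  also have "\<dots> = integral {-(2*pi)..-0} (\<lambda>x. g (-x))"
    by (subst integral_shift_Icc_real) simp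
  also have "\<dots> = integral {0..2*pi} g"
    using Henstock_Kurzweil_Integration.integral_reflect_real[where a=0 and b="2*pi" and f=g] by (simp only: minus_zero)
  finally show ?thesis .
qed

lemma cnj_fcoef_reflect:
  fixes f :: "real \<Rightarrow> real"
  assumes "\<And>z. f (2*pi - z) = s * f z"
  shows "cnj (fcoef f n) = of_real s * fcoef f n"
proof -
  have cis_reflect: "cis (of_int n * (2*pi - z)) = cis (- (of_int n * z))" for z
  proof -
    have "of_int n * (2*pi - z) = 2 * pi * of_int n + - (of_int n * z)"
      by (simp add: algebra_simps)
    then have "cis (of_int n * (2*pi - z)) = cis (2 * pi * of_int n) * cis (- (of_int n * z))"
      by (simp only: cis_mult[symmetric])
    then show ?thesis
      by (simp add: cis_multiple_2pi)
  qed
  have "cnj (fcoef f n) = complex_of_real (1 / (2 * pi)) *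
      integral {0..2*pi} (\<lambda>z. complex_of_real (f z) * cis (of_int n * z))"
    unfolding fcoef_def by (simp add: integral_cnj cis_cnj)
  also have "integral {0..2*pi} (\<lambda>z. complex_of_real (f z) * cis (of_int n * z))
      = integral {0..2*pi} (\<lambda>z. complex_of_real (f (2*pi - z)) * cis (of_int n * (2*pi - z)))"
    by (rule integral_reflect_0_2pi[symmetric])
  also have "\<dots> = integral {0..2*pi} (\<lambda>z. of_real s * (complex_of_real (f z) * cis (- (of_int n * z))))"
    using assms cis_reflect by (simp add: mult.assoc)
  also have "\<dots> = of_real s * integral {0..2*pi} (\<lambda>z. complex_of_real (f z) * cis (- (of_int n * z)))"
    by (rule integral_mult_right)
  finally show ?thesis
    unfolding fcoef_def by (simp add: algebra_simps)
qed

lemma fconv_cnj: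
  assumes "\<And>m. cnj (f m) = of_real s * f m"
  shows "fconv f (\<lambda>n. of_real s * cnj (u n)) n = cnj (fconv f u n)"
proof -
  have "cnj (fconv f u n) = (\<Sum>\<^sub>\<infinity>m\<in>UNIV. cnj (f m * u (n - m)))"
    unfolding fconv_def by (rule infsum_cnj[symmetric])
  also have "\<dots> = fconv f (\<lambda>n. of_real s * cnj (u n)) n"
    unfolding fconv_def by (simp add: assms ac_simps)
  finally show ?thesis ..
qed

lemma dinv_cnj: "dinv (\<lambda>n. cnj (u n)) = (\<lambda>n. - cnj (dinv u n))"
  by (simp add: dinv_def dsym_def fun_eq_iff)

lemma deriv_reflect:
  fixes f :: "real \<Rightarrow> real"
  assumes "\<And>z. f differentiable (at z)" and "\<And>z. f (2*pi - z) = f z"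
  shows "deriv f (2*pi - z) = - deriv f z"
proof -
  have D: "(f has_real_derivative deriv f x) (at x)" for x
    using assms(1) by (simp add: DERIV_deriv_iff_real_differentiable)
  have "((\<lambda>x. f (2*pi - x)) has_real_derivative deriv f (2*pi - z) * (-1)) (at z)"
    by (rule DERIV_chain2[OF D]) (auto intro!: derivative_eq_intros)
  moreover have "(\<lambda>x. f (2*pi - x)) = f"
    using assms(2) by (rule ext)
  ultimately have "(f has_real_derivative deriv f (2*pi - z) * (-1)) (at z)"
    by simp
  with D[of z] have "deriv f z = deriv f (2*pi - z) * (-1)"
    by (rule DERIV_unique)
  then show ?thesis by simp
qed

lemma KD_op_cnj:
  assumes "\<And>z. w differentiable (at z)" and "\<And>z. w (2*pi - z) = w z"
  shows "KD_op k \<rho> \<phi> \<gamma> c w (\<lambda>n. cnj (u n)) n = - cnj (KD_op k \<rho> \<phi> \<gamma> c w u n)"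
proof -
  have "cnj (fcoef w m) = of_real 1 * fcoef w m" for m
    by (rule cnj_fcoef_reflect) (simp add: assms(2))
  then have conv_w: "fconv (fcoef w) (\<lambda>n. cnj (u n)) n = cnj (fconv (fcoef w) u n)"
    using fconv_cnj[of "fcoef w" 1] by simp
  have "cnj (fcoef (\<lambda>z. (w z)\<^sup>2) m) = of_real 1 * fcoef (\<lambda>z. (w z)\<^sup>2) m" for m
    by (rule cnj_fcoef_reflect) (simp add: assms(2))
  then have conv_w2: "fconv (fcoef (\<lambda>z. (w z)\<^sup>2)) (\<lambda>n. cnj (u n)) n
      = cnj (fconv (fcoef (\<lambda>z. (w z)\<^sup>2)) u n)"
    using fconv_cnj[of "fcoef (\<lambda>z. (w z)\<^sup>2)" 1] by simp
  have "cnj (fcoef (deriv w) m) = of_real (-1) * fcoef (deriv w) m" for m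
    by (rule cnj_fcoef_reflect) (simp add: deriv_reflect assms)
  then have conv_dw: "fconv (fcoef (deriv w)) (\<lambda>n. - cnj (dinv u n)) n
      = cnj (fconv (fcoef (deriv w)) (dinv u) n)"
    using fconv_cnj[of "fcoef (deriv w)" "-1"] by simp
  show ?thesis
    by (simp add: KD_op_def conv_w conv_w2 conv_dw dinv_cnj dsym_def algebra_simps)
qed

lemma KD_eigenvalue_reflect:
  assumes "\<And>z. w differentiable (at z)" and "\<And>z. w (2*pi - z) = w z"
    and "KD_eigenvalue k \<rho> \<phi> \<gamma> c w \<mu>"
  shows "KD_eigenvalue k \<rho> \<phi> \<gamma> c w (- cnj \<mu>)"
proof -
  obtain u where "H3_0 u" and "u \<noteq> (\<lambda>_. 0)" and eig: "\<And>n. KD_op k \<rho> \<phi> \<gamma> c w u n = \<mu> * u n"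
    using assms(3) unfolding KD_eigenvalue_def by blast
  moreover have "H3_0 (\<lambda>n. cnj (u n))"
    using \<open>H3_0 u\<close> by (simp add: H3_0_def)
  moreover have "(\<lambda>n. cnj (u n)) \<noteq> (\<lambda>_. 0)"
    using \<open>u \<noteq> (\<lambda>_. 0)\<close> by (metis complex_cnj_zero_iff)
  moreover have "KD_op k \<rho> \<phi> \<gamma> c w (\<lambda>n. cnj (u n)) n = - cnj \<mu> * cnj (u n)" for n
    by (simp add: KD_op_cnj assms(1,2) eig)
  ultimately show ?thesis
    unfolding KD_eigenvalue_def by blast
qed

theorem lemma2p2:
  fixes k \<rho> \<phi> \<gamma> :: real
    and w :: "real \<Rightarrow> real \<Rightarrow> real"   \<comment> \<open>w a z\<close>
    and c :: "real \<Rightarrow> real"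
  assumes k_pos: "k > 0"
    and w_smooth: "\<forall>a. \<forall>j::nat. \<forall>z. ((deriv ^^ j) (w a)) differentiable (at z)"
    and w_even: "\<forall>a z. w a (- z) = w a z"
    and w_per: "\<forall>a z. w a (z + 2 * pi) = w a z"
    and w_exp: "\<exists>C \<delta>. \<delta> > 0 \<and> (\<forall>a z. \<bar>a\<bar> < \<delta> \<longrightarrow>
        \<bar>w a z - (a * cos z
                  + a\<^sup>2 * (- (3 * \<rho>) / (2 * k\<^sup>2) + \<rho> / (2 * k\<^sup>2) * cos (2 * z))
                  + a ^ 3 * (- (\<phi>\<^sup>2) / (64 * k\<^sup>2) + 3 * \<rho>\<^sup>2 / (16 * k ^ 4)) * cos (3 * z))\<bar>
        \<le> C * a ^ 4)"
    and c_exp: "\<exists>C \<delta>. \<delta> > 0 \<and> (\<forall>a. \<bar>a\<bar> < \<delta> \<longrightarrow>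
        \<bar>c a - (k\<^sup>2 + a\<^sup>2 * (3 * \<phi>\<^sup>2 / 8 + 15 * \<rho>\<^sup>2 / (2 * k\<^sup>2)))\<bar> \<le> C * a ^ 4)"
  shows "\<exists>\<delta>>0. \<forall>a. \<bar>a\<bar> < \<delta> \<longrightarrow> (\<forall>\<mu>.
           KD_eigenvalue k \<rho> \<phi> \<gamma> (c a) (w a) \<mu> \<longrightarrow>
           KD_eigenvalue k \<rho> \<phi> \<gamma> (c a) (w a) (- cnj \<mu>))"
  \<comment> \<open>The symmetry holds for every amplitude.\<close>
proof (intro exI[of _ 1] conjI allI impI)
  fix a :: real and \<mu>
  assume "KD_eigenvalue k \<rho> \<phi> \<gamma> (c a) (w a) \<mu>"
  moreover have "w a differentiable (at z)" for z
    using w_smooth by (metis funpow_0)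
  moreover have "w a (2*pi - z) = w a z" for z
    using w_even w_per by (metis add.commute diff_conv_add_uminus)
  ultimately show "KD_eigenvalue k \<rho> \<phi> \<gamma> (c a) (w a) (- cnj \<mu>)"
    by (rule KD_eigenvalue_reflect[rotated 2])
qed simp

end
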